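(* Let $n\ge 2$. Let $\mathfrak B_1=\{x^{\underline a}\partial_i\mid \underline a\in I^n,\ 1\le i\le n,\ a_i=0,\ a_j\neq p-1\text{ for some }j\neq i\}$, let $V_1=\mathrm{span}_{\mathbb F}\mathfrak B_1$, and let $V_2$ be the span of all $D_{ij}(x^{\underline a})$ with $\underline a\in I^n$, $1\le i<j\le n$, $a_i\neq 0$, $a_j\ne 0$. Then (1) $S(n)=V_1\oplus V_2$; (2) $\mathfrak B_1$ is a basis of $V_1$; (3) $\dim V_1=n(p^{n-1}-1)$ and $\dim V_2=(n-1)(p^n-1)-n(p^{n-1}-1)=np^{n-1}(p-1)-p^n+1$.
   Context: $\mathbb F$ is an algebraically closed field of characteristic $p>2$, $I=\{0,\dots,p-1\}$. $\mathcal A(n)$ is the truncated polynomial algebra with basis $x^{\underline a}=x_1^{a_1}\cdots x_n^{a_n}$, $\underline a\in I^n$, multiplication $x^{\underline a}x^{\underline b}=x^{\underline a+\underline b}$ ($=0$ if $\underline a+\underline b\notin I^n$). $W(n)$ is its derivation algebra, free over $\mathcal A(n)$ on $\partial_1,\dots,\partial_n$, $\partial_i(x_j)=\delta_{ij}$. $D_{ij}(f)=\partial_j(f)\partial_i-\partial_i(f)\partial_j$. $S(n)=[\widetilde S(n),\widetilde S(n)]$ where $\widetilde S(n)=\{\sum f_i\partial_i\in W(n)\mid\sum\partial_i(f_i)=0\}$. *)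

theory Defs
  imports "HOL-Computational_Algebra.Polynomial" "HOL-Library.Function_Algebras"
begin

definition expo :: "nat \<Rightarrow> nat \<Rightarrow> (nat \<Rightarrow> nat) set" where
  "expo p n = {a. (\<forall>k\<in>{1..n}. a k < p) \<and> (\<forall>k. k \<notin> {1..n} \<longrightarrow> a k = 0)}"

text \<open>Elements of A(n): coefficient functions (nat => nat) => 'a, supported on expo p n.
  Elements of W(n): D :: nat => (nat => nat) => 'a, D i is the coefficient of d_i
  (zero for i outside 1..n).\<close>
type_synonym 'a trunc = "(nat \<Rightarrow> nat) \<Rightarrow> 'a"
type_synonym 'a witt = "nat \<Rightarrow> 'a trunc"

definition dA :: "nat \<Rightarrow> nat \<Rightarrow> nat \<Rightarrow> 'a::field trunc \<Rightarrow> 'a trunc" where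
  "dA p n i f = (\<lambda>c. if c \<in> expo p n then of_nat (c i + 1) * f (c(i := c i + 1)) else 0)"

definition mulA :: "nat \<Rightarrow> nat \<Rightarrow> 'a::field trunc \<Rightarrow> 'a trunc \<Rightarrow> 'a trunc" where
  "mulA p n f g = (\<lambda>c. if c \<in> expo p n then
      (\<Sum>a\<in>expo p n. if (\<forall>k. a k \<le> c k) then f a * g (\<lambda>k. c k - a k) else 0) else 0)"

definition monoA :: "(nat \<Rightarrow> nat) \<Rightarrow> 'a::field trunc" where
  "monoA a = (\<lambda>c. if c = a then 1 else 0)"

definition Wn :: "nat \<Rightarrow> nat \<Rightarrow> 'a::field witt set" where
  "Wn p n = {D. \<forall>i a. D i a \<noteq> 0 \<longrightarrow> i \<in> {1..n} \<and> a \<in> expo p n}"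

definition applyW :: "nat \<Rightarrow> nat \<Rightarrow> 'a::field witt \<Rightarrow> 'a trunc \<Rightarrow> 'a trunc" where
  "applyW p n D f = (\<Sum>i\<in>{1..n}. mulA p n (D i) (dA p n i f))"

definition bracketW :: "nat \<Rightarrow> nat \<Rightarrow> 'a::field witt \<Rightarrow> 'a witt \<Rightarrow> 'a witt" where
  "bracketW p n D E = (\<lambda>j. if j \<in> {1..n} then applyW p n D (E j) - applyW p n E (D j) else 0)"

definition scaleW :: "'a::field \<Rightarrow> 'a witt \<Rightarrow> 'a witt" where
  "scaleW c D = (\<lambda>i a. c * D i a)"

definition divW :: "nat \<Rightarrow> nat \<Rightarrow> 'a::field witt \<Rightarrow> 'a trunc" where
  "divW p n D = (\<Sum>i\<in>{1..n}. dA p n i (D i))"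

definition Stilde :: "nat \<Rightarrow> nat \<Rightarrow> 'a::field witt set" where
  "Stilde p n = {D \<in> Wn p n. divW p n D = 0}"

definition Sn :: "nat \<Rightarrow> nat \<Rightarrow> 'a::field witt set" where
  "Sn p n = module.span scaleW {bracketW p n D E | D E. D \<in> Stilde p n \<and> E \<in> Stilde p n}"

definition vecW :: "nat \<Rightarrow> 'a::field trunc \<Rightarrow> 'a witt" where
  "vecW i f = (\<lambda>j. if j = i then f else 0)"

definition Dij :: "nat \<Rightarrow> nat \<Rightarrow> nat \<Rightarrow> nat \<Rightarrow> 'a::field trunc \<Rightarrow> 'a witt" where
  "Dij p n i j f = vecW i (dA p n j f) - vecW j (dA p n i f)"

definition B1 :: "nat \<Rightarrow> nat \<Rightarrow> 'a::field witt set" where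
  "B1 p n = {vecW i (monoA a) | a i. a \<in> expo p n \<and> i \<in> {1..n} \<and> a i = 0 \<and>
              (\<exists>j\<in>{1..n}. j \<noteq> i \<and> a j \<noteq> p - 1)}"

definition V1 :: "nat \<Rightarrow> nat \<Rightarrow> 'a::field witt set" where
  "V1 p n = module.span scaleW (B1 p n)"

definition V2 :: "nat \<Rightarrow> nat \<Rightarrow> 'a::field witt set" where
  "V2 p n = module.span scaleW {Dij p n i j (monoA a) | a i j. a \<in> expo p n \<and>
              1 \<le> i \<and> i < j \<and> j \<le> n \<and> a i \<noteq> 0 \<and> a j \<noteq> 0}"

end

theory Submission
  imports Defs "HOL-Library.FuncSet"
begin

text \<open>
  Split a derivation \<open>D = \<Sum> D_i \<partial>_i\<close> into its \<open>x_i\<close>-free part (monomials \<open>x^a \<partial>_i\<close> with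
  \<open>a_i = 0\<close>) and the rest. The \<open>x_i\<close>-free part is automatically divergence free, so for divergence
  free \<open>D\<close> the rest is divergence free too, and the divergence free derivations whose \<open>i\<close>-th
  component is divisible by \<open>x_i\<close> have as a basis the elements \<open>D_ki(x^(c + \<epsilon>_i + \<epsilon>_k))\<close>, where
  \<open>k < i\<close> and \<open>k\<close> is the least index with \<open>c_k < p - 1\<close>: each has a coefficient no other basis
  element has. These elements lie in \<open>V_2\<close>, so \<open>V_2\<close> is exactly this space and meets \<open>V_1\<close>
  (which is \<open>x_i\<close>-free) trivially.

  For \<open>D, E\<close> divergence free, taking the coefficient of \<open>x^\<tau>\<close>, \<open>\<tau> = (p-1, \<dots>, p-1)\<close>, is an
  integral on \<open>A(n)\<close>, and integration by parts shows that \<open>[D, E]\<close> has no term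
  \<open>x^(\<tau> - (p-1) \<epsilon>_i) \<partial>_i\<close>; this puts the \<open>x_i\<close>-free part of \<open>[D, E]\<close> into \<open>V_1\<close>. Conversely the
  elements of \<open>B_1\<close> and the generators of \<open>V_2\<close> are explicit commutators.
\<close>

section \<open>The truncated polynomial algebra\<close>

lemma sum_fun_apply: "(\<Sum>x\<in>A. F x) c = (\<Sum>x\<in>A. F x c)"
  by (induct A rule: infinite_finite_induct) auto

lemma sum_fun_apply2: "(\<Sum>x\<in>A. F x) c d = (\<Sum>x\<in>A. F x c d)"
  by (induct A rule: infinite_finite_induct) auto

lemma
  assumes "finite K" "\<And>k. k \<in> K \<Longrightarrow> finite (T k)"
  shows finite_box_funs: "finite {a. (\<forall>k\<in>K. a k \<in> T k) \<and> (\<forall>k. k \<notin> K \<longrightarrow> a k = (0::'b::zero))}"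
    and card_box_funs: "card {a. (\<forall>k\<in>K. a k \<in> T k) \<and> (\<forall>k. k \<notin> K \<longrightarrow> a k = (0::'b))}
                        = (\<Prod>k\<in>K. card (T k))"
proof -
  let ?S = "{a. (\<forall>k\<in>K. a k \<in> T k) \<and> (\<forall>k. k \<notin> K \<longrightarrow> a k = (0::'b))}"
  have bij: "bij_betw (\<lambda>a. restrict a K) ?S (PiE K T)"
  proof (rule bij_betwI[where g="\<lambda>f k. if k \<in> K then f k else 0"])
    show "(\<lambda>a. restrict a K) \<in> ?S \<rightarrow> PiE K T" by auto
    show "(\<lambda>f k. if k \<in> K then f k else 0) \<in> PiE K T \<rightarrow> ?S" by auto
    show "(\<lambda>k. if k \<in> K then restrict a K k else 0) = a" if "a \<in> ?S" for a
      using that by auto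
    show "restrict (\<lambda>k. if k \<in> K then f k else 0) K = f" if "f \<in> PiE K T" for f
      using that by (auto simp: PiE_def extensional_def restrict_def)
  qed
  then show "finite ?S"
    using bij_betw_finite finite_PiE assms by blast
  show "card ?S = (\<Prod>k\<in>K. card (T k))"
    using bij_betw_same_card[OF bij] card_PiE[OF assms(1)] by simp
qed

lemma expo_eq_box:
  "expo p n = {a. (\<forall>k\<in>{1..n}. a k \<in> {..<p}) \<and> (\<forall>k. k \<notin> {1..n} \<longrightarrow> a k = 0)}"
  unfolding expo_def by auto

lemma finite_expo [simp]: "finite (expo p n)"
  unfolding expo_eq_box by (rule finite_box_funs) auto

lemma card_expo: "card (expo p n) = p ^ n"
  unfolding expo_eq_box by (subst card_box_funs) auto

lemma card_expo_slice:
  assumes i: "i \<in> {1..n}"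
  shows "card {a \<in> expo p n. a i \<in> T} = card (T \<inter> {..<p}) * p ^ (n - 1)"
proof -
  let ?T = "\<lambda>k. if k = i then T \<inter> {..<p} else {..<p}"
  have "{a \<in> expo p n. a i \<in> T} = {a. (\<forall>k\<in>{1..n}. a k \<in> ?T k) \<and> (\<forall>k. k \<notin> {1..n} \<longrightarrow> a k = 0)}"
    using i by (auto simp: expo_def)
  also have "card \<dots> = (\<Prod>k\<in>{1..n}. card (?T k))"
    by (rule card_box_funs) auto
  also have "\<dots> = card (T \<inter> {..<p}) * (\<Prod>k\<in>{1..n} - {i}. p)"
    using i by (simp add: prod.remove[of _ i])
  finally show ?thesis
    using i by simp
qed

lemma expo_mono:
  assumes "c \<in> expo p n" "\<forall>k. a k \<le> c k"
  shows "a \<in> expo p n"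
proof -
  have "\<forall>k\<in>{1..n}. a k < p"
    using assms by (auto simp: expo_def intro: le_less_trans)
  moreover have "a k = 0" if "k \<notin> {1..n}" for k
    using assms(2)[rule_format, of k] assms(1) that by (simp add: expo_def)
  ultimately show ?thesis
    by (simp add: expo_def)
qed

lemma expo_outside: "a \<in> expo p n \<Longrightarrow> k \<notin> {1..n} \<Longrightarrow> a k = 0"
  by (simp add: expo_def)

lemma expo_raise:
  "c \<in> expo p n \<Longrightarrow> i \<in> {1..n} \<Longrightarrow> c i + 1 < p \<Longrightarrow> c(i := c i + 1) \<in> expo p n"
  by (auto simp: expo_def)

lemma zero_in_expo: "p > 0 \<Longrightarrow> 0 \<in> expo p n"
  by (simp add: expo_def)

definition dec :: "(nat \<Rightarrow> nat) \<Rightarrow> nat \<Rightarrow> nat \<Rightarrow> nat" where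
  "dec a i = a(i := a i - 1)"

lemma dec_in_expo: "a \<in> expo p n \<Longrightarrow> dec a i \<in> expo p n"
  by (rule expo_mono[of a]) (auto simp: dec_def)

lemma dec_in_expo_imp_eq_p:
  assumes dec: "dec s i \<in> expo p n" and s: "s \<notin> expo p n" "\<forall>k. k \<notin> {1..n} \<longrightarrow> s k = 0"
  shows "s i = p"
proof -
  have "s i \<noteq> 0"
  proof
    assume "s i = 0"
    then have "dec s i = s"
      by (auto simp: dec_def fun_eq_iff)
    then show False
      using dec s(1) by simp
  qed
  then have i: "i \<in> {1..n}"
    using s(2) by auto
  have lt: "s k < p" if "k \<noteq> i" "k \<in> {1..n}" for k
  proof -
    have "dec s i k < p"
      using dec that(2) by (simp add: expo_def)
    then show ?thesis
      using that(1) by (simp add: dec_def)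
  qed
  have "dec s i i < p"
    using dec i by (simp add: expo_def)
  then have "s i - 1 < p"
    by (simp add: dec_def)
  moreover have "\<not> s i < p"
  proof
    assume "s i < p"
    then have "\<forall>k\<in>{1..n}. s k < p"
      using lt by metis
    then show False
      using s by (simp add: expo_def)
  qed
  ultimately show ?thesis
    by linarith
qed

definition supported :: "nat \<Rightarrow> nat \<Rightarrow> 'a::field trunc \<Rightarrow> bool" where
  "supported p n f \<longleftrightarrow> (\<forall>c. c \<notin> expo p n \<longrightarrow> f c = 0)"

definition scaleA :: "'a::field \<Rightarrow> 'a trunc \<Rightarrow> 'a trunc" where
  "scaleA s f = (\<lambda>c. s * f c)"

lemma scaleA_apply [simp]: "scaleA s f c = s * f c"
  by (simp add: scaleA_def)

lemma scaleA_scaleA [simp]: "scaleA a (scaleA b f) = scaleA (a * b) f"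
  by (rule ext) simp

lemma scaleA_add_right: "scaleA s (f + g) = scaleA s f + scaleA s g"
  by (rule ext) (simp add: algebra_simps)

lemma scaleA_add_left: "scaleA (a + b) f = scaleA a f + scaleA b f"
  by (rule ext) (simp add: algebra_simps)

lemma scaleA_zero_right [simp]: "scaleA s 0 = 0"
  by (rule ext) simp

lemma scaleA_zero_left [simp]: "scaleA 0 f = 0"
  by (rule ext) simp

lemma scaleA_sum: "scaleA s (\<Sum>x\<in>A. F x) = (\<Sum>x\<in>A. scaleA s (F x))"
  by (rule ext) (simp add: sum_fun_apply sum_distrib_left)

lemma supported_mulA [simp]: "supported p n (mulA p n f g)"
  by (simp add: supported_def mulA_def)

lemma supported_dA [simp]: "supported p n (dA p n i f)"
  by (simp add: supported_def dA_def)

lemma supported_monoA [simp]: "a \<in> expo p n \<Longrightarrow> supported p n (monoA a)"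
  by (simp add: supported_def monoA_def)

lemma supported_sum: "(\<And>x. x \<in> A \<Longrightarrow> supported p n (F x)) \<Longrightarrow> supported p n (\<Sum>x\<in>A. F x)"
  by (auto simp: supported_def sum_fun_apply intro!: sum.neutral)

lemma monoA_expansion:
  assumes "supported p n f"
  shows "f = (\<Sum>a\<in>expo p n. scaleA (f a) (monoA a))"
proof (rule ext)
  fix c
  show "f c = (\<Sum>a\<in>expo p n. scaleA (f a) (monoA a)) c"
    using assms by (auto simp: sum_fun_apply monoA_def supported_def if_distrib cong: if_cong)
qed

lemma mulA_add_left: "mulA p n (f + g) h = mulA p n f h + mulA p n g h"
  by (rule ext) (auto simp: mulA_def algebra_simps sum.distrib[symmetric] intro!: sum.cong cong: if_cong)

lemma mulA_add_right: "mulA p n h (f + g) = mulA p n h f + mulA p n h g"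
  by (rule ext) (auto simp: mulA_def algebra_simps sum.distrib[symmetric] intro!: sum.cong cong: if_cong)

lemma mulA_diff_right: "mulA p n h (f - g) = mulA p n h f - mulA p n h g"
  using mulA_add_right[of p n h "f - g" g] by (simp add: eq_diff_eq)

lemma mulA_scaleA_left: "mulA p n (scaleA s f) h = scaleA s (mulA p n f h)"
  by (rule ext) (auto simp: mulA_def algebra_simps sum_distrib_left intro!: sum.cong cong: if_cong)

lemma mulA_scaleA_right: "mulA p n h (scaleA s f) = scaleA s (mulA p n h f)"
  by (rule ext) (auto simp: mulA_def algebra_simps sum_distrib_left intro!: sum.cong cong: if_cong)

lemma mulA_zero_left [simp]: "mulA p n 0 h = 0"
  by (rule ext) (auto simp: mulA_def cong: if_cong)

lemma mulA_zero_right [simp]: "mulA p n h 0 = 0"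
  by (rule ext) (auto simp: mulA_def cong: if_cong)

lemma mulA_sum_left: "mulA p n (\<Sum>x\<in>A. F x) h = (\<Sum>x\<in>A. mulA p n (F x) h)"
  using sum_comp_morphism[of "\<lambda>f. mulA p n f h" F A] by (simp add: mulA_add_left comp_def)

lemma mulA_sum_right: "mulA p n h (\<Sum>x\<in>A. F x) = (\<Sum>x\<in>A. mulA p n h (F x))"
  using sum_comp_morphism[of "mulA p n h" F A] by (simp add: mulA_add_right comp_def)

lemma mulA_lincomb:
  "mulA p n (\<Sum>a\<in>A. scaleA (u a) (F a)) (\<Sum>b\<in>B. scaleA (v b) (G b))
   = (\<Sum>a\<in>A. \<Sum>b\<in>B. scaleA (u a * v b) (mulA p n (F a) (G b)))"
  by (simp add: mulA_sum_left mulA_sum_right mulA_scaleA_left mulA_scaleA_right scaleA_sum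
      mult.commute) (rule sum.swap)

lemma dA_add: "dA p n i (f + g) = dA p n i f + dA p n i g"
  by (rule ext) (auto simp: dA_def algebra_simps)

lemma dA_diff: "dA p n i (f - g) = dA p n i f - dA p n i g"
  by (rule ext) (auto simp: dA_def algebra_simps)

lemma dA_scaleA: "dA p n i (scaleA s f) = scaleA s (dA p n i f)"
  by (rule ext) (auto simp: dA_def algebra_simps)

lemma dA_zero [simp]: "dA p n i 0 = 0"
  by (rule ext) (auto simp: dA_def)

lemma dA_sum: "dA p n i (\<Sum>x\<in>A. F x) = (\<Sum>x\<in>A. dA p n i (F x))"
  using sum_comp_morphism[of "dA p n i" F A] by (simp add: dA_add comp_def)

lemma dA_lincomb: "dA p n i (\<Sum>a\<in>A. scaleA (u a) (F a)) = (\<Sum>a\<in>A. scaleA (u a) (dA p n i (F a)))"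
  by (simp add: dA_sum dA_scaleA)

lemma mulA_monoA:
  assumes "a \<in> expo p n" "b \<in> expo p n"
  shows "mulA p n (monoA a) (monoA b) = (if a + b \<in> expo p n then monoA (a + b) else 0)"
proof (rule ext)
  fix c
  have split: "((\<forall>k. a k \<le> c k) \<and> (\<lambda>k. c k - a k) = b) \<longleftrightarrow> c = a + b"
    by (auto simp: fun_eq_iff) (metis le_add_diff_inverse)
  have "(\<Sum>x\<in>expo p n. if \<forall>k. x k \<le> c k then monoA a x * monoA b (\<lambda>k. c k - x k) else 0)
      = (\<Sum>x\<in>expo p n. if x = a then (if \<forall>k. a k \<le> c k then monoA b (\<lambda>k. c k - a k) else 0) else 0)"
    by (rule sum.cong) (auto simp: monoA_def)
  also have "\<dots> = (if c = a + b then 1 else 0)"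
    using assms(1) split by (auto simp: monoA_def)
  finally show "mulA p n (monoA a) (monoA b) c = (if a + b \<in> expo p n then monoA (a + b) else 0) c"
    unfolding mulA_def by (auto simp: monoA_def)
qed

lemma dA_monoA:
  assumes "a \<in> expo p n"
  shows "dA p n i (monoA a) = scaleA (of_nat (a i)) (monoA (dec a i))"
proof (rule ext)
  fix c
  show "dA p n i (monoA a) c = scaleA (of_nat (a i)) (monoA (dec a i)) c"
  proof (cases "a i = 0")
    case True
    then have "c(i := c i + 1) \<noteq> a"
      by (metis add_is_0 fun_upd_same zero_neq_one)
    then show ?thesis
      using True by (simp add: dA_def monoA_def)
  next
    case False
    then have "c(i := c i + 1) = a \<longleftrightarrow> c = dec a i"
      by (auto simp: dec_def fun_eq_iff split: if_splits)
    moreover have "c = dec a i \<Longrightarrow> c \<in> expo p n \<and> c i + 1 = a i"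
      using dec_in_expo[OF assms] False by (simp add: dec_def)
    ultimately show ?thesis
      unfolding dA_def monoA_def scaleA_apply by (auto simp flip: of_nat_Suc)
  qed
qed

text \<open>The Leibniz rule survives truncation only in characteristic \<open>p\<close>: if \<open>x^a x^b = 0\<close> in \<open>A(n)\<close>
  but \<open>x^(a + b - \<epsilon>_i)\<close> is a monomial of \<open>A(n)\<close>, then \<open>a_i + b_i = p\<close>.\<close>

lemma dA_mulA_monoA:
  assumes a: "a \<in> expo p n" and b: "b \<in> expo p n" and p0: "of_nat p = (0::'a::field)"
  shows "(dA p n i (mulA p n (monoA a) (monoA b)) :: 'a trunc)
    = mulA p n (dA p n i (monoA a)) (monoA b) + mulA p n (monoA a) (dA p n i (monoA b))"
proof -
  define s where "s = a + b"
  define X :: "'a trunc" where "X = (if dec s i \<in> expo p n then monoA (dec s i) else 0)"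
  have left: "mulA p n (dA p n i (monoA a)) (monoA b) = scaleA (of_nat (a i)) X"
  proof (cases "a i = 0")
    case False
    then have "dec a i + b = dec s i"
      by (auto simp: s_def dec_def fun_eq_iff)
    then show ?thesis
      by (simp add: dA_monoA[OF a] mulA_scaleA_left mulA_monoA[OF dec_in_expo[OF a] b] X_def)
  qed (simp add: dA_monoA[OF a])
  have right: "mulA p n (monoA a) (dA p n i (monoA b)) = scaleA (of_nat (b i)) X"
  proof (cases "b i = 0")
    case False
    then have "a + dec b i = dec s i"
      by (auto simp: s_def dec_def fun_eq_iff)
    then show ?thesis
      by (simp add: dA_monoA[OF b] mulA_scaleA_right mulA_monoA[OF a dec_in_expo[OF b]] X_def)
  qed (simp add: dA_monoA[OF b])
  have "dA p n i (mulA p n (monoA a) (monoA b)) = scaleA (of_nat (s i)) X"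
  proof (cases "s \<in> expo p n")
    case True
    then show ?thesis
      by (simp add: mulA_monoA[OF a b] dA_monoA dec_in_expo X_def flip: s_def)
  next
    case False
    have "of_nat (s i) = (0::'a)" if "dec s i \<in> expo p n"
      using dec_in_expo_imp_eq_p[OF that False] a b p0 by (simp add: s_def expo_def)
    then show ?thesis
      using False by (auto simp: mulA_monoA[OF a b] X_def simp flip: s_def)
  qed
  then show ?thesis
    by (simp add: left right s_def scaleA_add_left)
qed

context
  fixes p n :: nat
begin

abbreviation monoA_sum :: "'a::field trunc \<Rightarrow> 'a trunc" where
  "monoA_sum f \<equiv> (\<Sum>a\<in>expo p n. scaleA (f a) (monoA a))"

lemma dA_mulA:
  assumes f: "supported p n f" and g: "supported p n g" and p0: "of_nat p = (0::'a::field)"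
  shows "dA p n i (mulA p n f g) = mulA p n (dA p n i f) g + mulA p n f (dA p n i (g::'a trunc))"
proof -
  have "dA p n i (mulA p n (monoA_sum f) (monoA_sum g))
     = (\<Sum>a\<in>expo p n. \<Sum>b\<in>expo p n. scaleA (f a * g b) (dA p n i (mulA p n (monoA a) (monoA b))))"
    unfolding mulA_lincomb by (simp add: dA_sum dA_scaleA)
  also have "\<dots> = (\<Sum>a\<in>expo p n. \<Sum>b\<in>expo p n. scaleA (f a * g b)
      (mulA p n (dA p n i (monoA a)) (monoA b) + mulA p n (monoA a) (dA p n i (monoA b))))"
    by (intro sum.cong refl) (simp add: dA_mulA_monoA p0)
  also have "\<dots> = mulA p n (dA p n i (monoA_sum f)) (monoA_sum g)
      + mulA p n (monoA_sum f) (dA p n i (monoA_sum g))"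
    unfolding dA_lincomb mulA_lincomb by (simp add: scaleA_add_right sum.distrib)
  finally show ?thesis
    using monoA_expansion[OF f] monoA_expansion[OF g] by simp
qed

lemma mulA_commute:
  assumes f: "supported p n f" and g: "supported p n g"
  shows "mulA p n f g = mulA p n g (f::'a::field trunc)"
proof -
  have "mulA p n (monoA_sum f) (monoA_sum g) = mulA p n (monoA_sum g) (monoA_sum f)"
    unfolding mulA_lincomb
    by (subst sum.swap) (intro sum.cong refl, simp add: mulA_monoA add.commute mult.commute)
  then show ?thesis
    using monoA_expansion[OF f] monoA_expansion[OF g] by simp
qed

lemma mulA_monoA_assoc:
  assumes "a \<in> expo p n" "b \<in> expo p n" "e \<in> expo p n"
  shows "mulA p n (mulA p n (monoA a) (monoA b)) (monoA e)
    = (mulA p n (monoA a) (mulA p n (monoA b) (monoA e)) :: 'a::field trunc)"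
proof (cases "a + b + e \<in> expo p n")
  case True
  have "a + b \<in> expo p n" "b + e \<in> expo p n"
    by (rule expo_mono[OF True], simp)+
  then show ?thesis
    using assms True by (simp add: mulA_monoA add.assoc)
qed (use assms in \<open>simp add: mulA_monoA add.assoc\<close>)

lemma mulA_assoc:
  assumes f: "supported p n f" and g: "supported p n g" and h: "supported p n h"
  shows "mulA p n (mulA p n f g) h = mulA p n f (mulA p n g (h::'a::field trunc))"
proof -
  have "mulA p n (mulA p n (monoA_sum f) (monoA_sum g)) (monoA_sum h)
     = (\<Sum>a\<in>expo p n. \<Sum>b\<in>expo p n. \<Sum>e\<in>expo p n. scaleA (f a * g b * h e)
          (mulA p n (mulA p n (monoA a) (monoA b)) (monoA e)))"
    unfolding mulA_lincomb
    by (simp only: mulA_sum_left mulA_scaleA_left,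
        simp only: mulA_sum_right mulA_scaleA_right scaleA_sum scaleA_scaleA)
  also have "\<dots> = (\<Sum>a\<in>expo p n. \<Sum>b\<in>expo p n. \<Sum>e\<in>expo p n. scaleA (f a * (g b * h e))
          (mulA p n (monoA a) (mulA p n (monoA b) (monoA e))))"
    by (intro sum.cong refl) (simp add: mulA_monoA_assoc mult.assoc)
  also have "\<dots> = mulA p n (monoA_sum f) (mulA p n (monoA_sum g) (monoA_sum h))"
    unfolding mulA_lincomb
    by (simp only: mulA_sum_left mulA_scaleA_left,
        simp only: mulA_sum_right mulA_scaleA_right scaleA_sum scaleA_scaleA)
  finally show ?thesis
    using monoA_expansion[OF f] monoA_expansion[OF g] monoA_expansion[OF h] by simp
qed

lemma dA_commute:
  assumes f: "supported p n f"
  shows "dA p n i (dA p n j f) = dA p n j (dA p n i (f::'a::field trunc))"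
proof -
  have "dA p n i (dA p n j (monoA a)) = (dA p n j (dA p n i (monoA a)) :: 'a trunc)"
    if a: "a \<in> expo p n" for a
  proof (cases "i = j")
    case False
    then have "dec a j i = a i" "dec a i j = a j" "dec (dec a j) i = dec (dec a i) j"
      by (auto simp: dec_def fun_upd_twist)
    then show ?thesis
      by (simp add: dA_monoA a dec_in_expo dA_scaleA mult.commute)
  qed simp
  then have "dA p n i (dA p n j (monoA_sum f)) = dA p n j (dA p n i (monoA_sum f))"
    unfolding dA_lincomb by (intro sum.cong refl) simp
  then show ?thesis
    using monoA_expansion[OF f] by simp
qed

end

section \<open>Derivations\<close>

lemma Wn_supported: "D \<in> Wn p n \<Longrightarrow> supported p n (D i)"
  by (auto simp: Wn_def supported_def)

lemma supported_applyW [simp]: "supported p n (applyW p n D f)"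
  unfolding applyW_def by (rule supported_sum) simp

lemma bracketW_in_Wn: "bracketW p n D E \<in> Wn p n"
proof -
  have z: "applyW p n D' f a = 0" if "a \<notin> expo p n" for D' f a
    using supported_applyW[of p n D' f] that unfolding supported_def by blast
  show ?thesis
    unfolding Wn_def bracketW_def by (auto simp: z) (metis z)
qed

lemma sum_dA_applyW:
  assumes D: "D \<in> Wn p n" and E: "E \<in> Wn p n" and p0: "of_nat p = (0::'a::field)"
  shows "(\<Sum>j\<in>{1..n}. dA p n j (applyW p n D ((E::'a witt) j)))
    = (\<Sum>j\<in>{1..n}. \<Sum>i\<in>{1..n}. mulA p n (dA p n j (D i)) (dA p n i (E j)))
      + (\<Sum>i\<in>{1..n}. mulA p n (D i) (dA p n i (divW p n E)))"
proof -
  have "(\<Sum>j\<in>{1..n}. dA p n j (applyW p n D (E j)))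
     = (\<Sum>j\<in>{1..n}. \<Sum>i\<in>{1..n}. mulA p n (dA p n j (D i)) (dA p n i (E j))
                                  + mulA p n (D i) (dA p n j (dA p n i (E j))))"
    unfolding applyW_def dA_sum
    by (intro sum.cong refl) (simp add: dA_mulA Wn_supported[OF D] p0)
  also have "\<dots> = (\<Sum>j\<in>{1..n}. \<Sum>i\<in>{1..n}. mulA p n (dA p n j (D i)) (dA p n i (E j)))
      + (\<Sum>j\<in>{1..n}. \<Sum>i\<in>{1..n}. mulA p n (D i) (dA p n i (dA p n j (E j))))"
    by (simp add: sum.distrib dA_commute[OF Wn_supported[OF E]])
  also have "(\<Sum>j\<in>{1..n}. \<Sum>i\<in>{1..n}. mulA p n (D i) (dA p n i (dA p n j (E j))))
      = (\<Sum>i\<in>{1..n}. mulA p n (D i) (dA p n i (divW p n E)))"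
    unfolding divW_def dA_sum mulA_sum_right by (rule sum.swap)
  finally show ?thesis .
qed

lemma divW_bracketW:
  assumes D: "D \<in> Wn p n" and E: "E \<in> Wn p n" and p0: "of_nat p = (0::'a::field)"
  shows "divW p n (bracketW p n D (E::'a witt))
    = (\<Sum>i\<in>{1..n}. mulA p n (D i) (dA p n i (divW p n E)))
      - (\<Sum>i\<in>{1..n}. mulA p n (E i) (dA p n i (divW p n D)))"
proof -
  have "divW p n (bracketW p n D E)
      = (\<Sum>j\<in>{1..n}. dA p n j (applyW p n D (E j))) - (\<Sum>j\<in>{1..n}. dA p n j (applyW p n E (D j)))"
    unfolding divW_def bracketW_def sum_subtractf[symmetric]
    by (intro sum.cong refl) (simp add: dA_diff)
  moreover have "(\<Sum>j\<in>{1..n}. \<Sum>i\<in>{1..n}. mulA p n (dA p n j (D i)) (dA p n i (E j)))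
      = (\<Sum>j\<in>{1..n}. \<Sum>i\<in>{1..n}. mulA p n (dA p n j (E i)) (dA p n i (D j)))"
    by (subst sum.swap) (intro sum.cong refl, simp add: mulA_commute)
  ultimately show ?thesis
    using sum_dA_applyW[OF D E p0] sum_dA_applyW[OF E D p0] by simp
qed

lemma divW_bracketW_Stilde:
  "D \<in> Stilde p n \<Longrightarrow> E \<in> Stilde p n \<Longrightarrow> of_nat p = (0::'a::field)
    \<Longrightarrow> divW p n (bracketW p n D (E::'a witt)) = 0"
  by (simp add: Stilde_def divW_bracketW)

text \<open>The coefficient of \<open>x^\<tau>\<close>, \<open>\<tau> = (p-1, \<dots>, p-1)\<close>, behaves like an integral on \<open>A(n)\<close>:
  it vanishes on every derivative, so the Leibniz rule becomes integration by parts.\<close>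

definition top_expo :: "nat \<Rightarrow> nat \<Rightarrow> nat \<Rightarrow> nat" where
  "top_expo p n = (\<lambda>k. if k \<in> {1..n} then p - 1 else 0)"

definition top_at :: "nat \<Rightarrow> nat \<Rightarrow> nat \<Rightarrow> nat" where
  "top_at p i = (\<lambda>k. if k = i then p - 1 else 0)"

definition top_except :: "nat \<Rightarrow> nat \<Rightarrow> nat \<Rightarrow> nat \<Rightarrow> nat" where
  "top_except p n i = (top_expo p n)(i := 0)"

lemma top_expo_in_expo: "p \<ge> 1 \<Longrightarrow> top_expo p n \<in> expo p n"
  by (auto simp: top_expo_def expo_def)

lemma top_at_in_expo: "i \<in> {1..n} \<Longrightarrow> p \<ge> 1 \<Longrightarrow> top_at p i \<in> expo p n"
  by (auto simp: top_at_def expo_def)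

lemma top_except_eq_iff:
  assumes "a \<in> expo p n" "a i = 0"
  shows "a = top_except p n i \<longleftrightarrow> (\<forall>j\<in>{1..n}. j \<noteq> i \<longrightarrow> a j = p - 1)"
  using assms by (auto simp: top_except_def top_expo_def fun_eq_iff expo_def)

lemma dA_top_coeff_eq_0:
  assumes "p \<ge> 1" "j \<in> {1..n}" "of_nat p = (0::'a::field)"
  shows "dA p n j (h::'a trunc) (top_expo p n) = 0"
proof -
  have "top_expo p n j + 1 = p"
    using assms by (simp add: top_expo_def)
  then show ?thesis
    using assms top_expo_in_expo[of p n] by (simp add: dA_def)
qed

lemma mulA_dA_top_coeff:
  assumes f: "supported p n f" and g: "supported p n g" and j: "j \<in> {1..n}"
    and p1: "p \<ge> 1" and p0: "of_nat p = (0::'a::field)"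
  shows "mulA p n f (dA p n j g) (top_expo p n) = - mulA p n (dA p n j f) (g::'a trunc) (top_expo p n)"
  using dA_top_coeff_eq_0[OF p1 j p0, of "mulA p n f g"] dA_mulA[OF f g p0, of j]
  by (simp add: eq_neg_iff_add_eq_0 add.commute)

lemma mulA_top_at_top_coeff:
  assumes "p \<ge> 1" "i \<in> {1..n}"
  shows "mulA p n (monoA (top_at p i)) f (top_expo p n) = (f (top_except p n i) :: 'a::field)"
proof -
  have le: "\<forall>k. top_at p i k \<le> top_expo p n k"
    using assms by (auto simp: top_at_def top_expo_def)
  have "mulA p n (monoA (top_at p i)) f (top_expo p n)
     = (\<Sum>x\<in>expo p n. if \<forall>k. x k \<le> top_expo p n k
          then monoA (top_at p i) x * f (\<lambda>k. top_expo p n k - x k) else 0)"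
    using top_expo_in_expo[OF assms(1)] by (simp add: mulA_def)
  also have "\<dots> = (\<Sum>x\<in>expo p n. if x = top_at p i then f (\<lambda>k. top_expo p n k - top_at p i k) else 0)"
    using le by (intro sum.cong) (auto simp: monoA_def)
  also have "\<dots> = f (\<lambda>k. top_expo p n k - top_at p i k)"
    using top_at_in_expo[OF assms(2,1)] by simp
  also have "(\<lambda>k. top_expo p n k - top_at p i k) = top_except p n i"
    by (auto simp: top_expo_def top_at_def top_except_def)
  finally show ?thesis .
qed

lemma mulA_applyW_top_coeff:
  assumes D: "D \<in> Stilde p n" and g: "supported p n g" and i: "i \<in> {1..n}"
    and p1: "p \<ge> 1" and p0: "of_nat p = (0::'a::field)"
  shows "mulA p n (monoA (top_at p i)) (applyW p n D g) (top_expo p n)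
     = - mulA p n (mulA p n (dA p n i (monoA (top_at p i))) (D i)) (g::'a trunc) (top_expo p n)"
proof -
  let ?u = "monoA (top_at p i) :: 'a trunc"
  have u: "supported p n ?u"
    using top_at_in_expo[OF i p1] by simp
  have DW: "D \<in> Wn p n" and divD: "divW p n D = 0"
    using D by (auto simp: Stilde_def)
  have "mulA p n ?u (applyW p n D g) (top_expo p n)
      = (\<Sum>j\<in>{1..n}. mulA p n (mulA p n ?u (D j)) (dA p n j g) (top_expo p n))"
    by (simp add: applyW_def mulA_sum_right sum_fun_apply mulA_assoc[OF u Wn_supported[OF DW]])
  also have "\<dots> = (\<Sum>j\<in>{1..n}. - mulA p n (dA p n j (mulA p n ?u (D j))) g (top_expo p n))"
    by (intro sum.cong refl) (rule mulA_dA_top_coeff[OF supported_mulA g _ p1 p0], simp)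
  also have "\<dots> = - (\<Sum>j\<in>{1..n}. mulA p n (mulA p n (dA p n j ?u) (D j)) g (top_expo p n))
                 - mulA p n (mulA p n ?u (divW p n D)) g (top_expo p n)"
    by (simp add: dA_mulA[OF u Wn_supported[OF DW] p0] mulA_add_left divW_def mulA_sum_right
        mulA_sum_left sum_fun_apply sum.distrib sum_negf sum_subtractf)
  also have "(\<Sum>j\<in>{1..n}. mulA p n (mulA p n (dA p n j ?u) (D j)) g (top_expo p n))
      = (\<Sum>j\<in>{1..n}. if j = i then mulA p n (mulA p n (dA p n i ?u) (D i)) g (top_expo p n) else 0)"
    using top_at_in_expo[OF i p1] by (intro sum.cong refl) (auto simp: dA_monoA top_at_def)
  also have "mulA p n ?u (divW p n D) = 0"
    using divD by simp
  finally show ?thesis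
    using i mulA_zero_left[of p n g, unfolded zero_fun_def] by simp
qed

text \<open>After integration by parts, the coefficient of \<open>x^\<tau>\<close> in \<open>x_i^(p-1) [D, E]_i\<close> is symmetric
  in \<open>D\<close> and \<open>E\<close>.\<close>

lemma bracketW_top_except_coeff:
  assumes D: "D \<in> Stilde p n" and E: "E \<in> Stilde p n" and i: "i \<in> {1..n}"
    and p1: "p \<ge> 1" and p0: "of_nat p = (0::'a::field)"
  shows "bracketW p n D (E::'a witt) i (top_except p n i) = 0"
proof -
  let ?u = "monoA (top_at p i) :: 'a trunc"
  let ?v = "dA p n i ?u"
  have Di: "supported p n (D i)" and Ei: "supported p n (E i)"
    using D E by (auto simp: Stilde_def Wn_supported)
  have "bracketW p n D E i (top_except p n i) = mulA p n ?u (bracketW p n D E i) (top_expo p n)"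
    by (rule mulA_top_at_top_coeff[OF p1 i, symmetric])
  also have "\<dots> = mulA p n ?u (applyW p n D (E i)) (top_expo p n)
                 - mulA p n ?u (applyW p n E (D i)) (top_expo p n)"
    using i by (simp add: bracketW_def mulA_diff_right)
  also have "\<dots> = - mulA p n (mulA p n ?v (D i)) (E i) (top_expo p n)
                 + mulA p n (mulA p n ?v (E i)) (D i) (top_expo p n)"
    by (simp add: mulA_applyW_top_coeff[OF D Ei i p1 p0] mulA_applyW_top_coeff[OF E Di i p1 p0])
  also have "mulA p n (mulA p n ?v (D i)) (E i) = mulA p n (mulA p n ?v (E i)) (D i)"
    by (simp add: mulA_assoc[OF _ Di Ei] mulA_assoc[OF _ Ei Di] mulA_commute[OF Di Ei])
  finally show ?thesis
    by simp
qed

section \<open>Two complementary subspaces of \<open>W(n)\<close>\<close>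

interpretation W: vector_space "scaleW :: 'a::field \<Rightarrow> 'a witt \<Rightarrow> 'a witt"
  by unfold_locales (auto simp: scaleW_def fun_eq_iff algebra_simps)

lemma scaleW_apply [simp]: "scaleW s D i a = s * D i a"
  by (simp add: scaleW_def)

lemma vecW_apply: "vecW i f j = (if j = i then f else 0)"
  by (simp add: vecW_def)

lemma vecW_in_Wn: "i \<in> {1..n} \<Longrightarrow> supported p n f \<Longrightarrow> vecW i f \<in> Wn p n"
  by (auto simp: Wn_def vecW_def supported_def)

lemma divW_add: "divW p n (D + E) = divW p n D + divW p n E"
  by (simp add: divW_def dA_add sum.distrib)

lemma divW_diff: "divW p n (D - E) = divW p n D - divW p n E"
  by (simp add: divW_def dA_diff sum_subtractf)

lemma divW_scaleW: "divW p n (scaleW s D) = scaleA s (divW p n D)"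
proof -
  have "scaleW s D i = scaleA s (D i)" for i
    by (rule ext) simp
  then show ?thesis
    by (simp add: divW_def dA_scaleA scaleA_sum)
qed

lemma divW_zero [simp]: "divW p n 0 = 0"
  by (simp add: divW_def zero_fun_def[symmetric])

lemma divW_vecW: "i \<in> {1..n} \<Longrightarrow> divW p n (vecW i f) = dA p n i f"
  unfolding divW_def vecW_def
  by (simp add: if_distrib[of "dA p n _"] sum.delta zero_fun_def[symmetric] cong: if_cong)

lemma Wn_eq: "Wn p n = {D. \<forall>i a. i \<notin> {1..n} \<or> a \<notin> expo p n \<longrightarrow> D i a = 0}"
  unfolding Wn_def by blast

definition W_without_xi :: "nat \<Rightarrow> nat \<Rightarrow> 'a::field witt set" where
  "W_without_xi p n = {D \<in> Wn p n. \<forall>i b. b i \<noteq> 0 \<longrightarrow> D i b = 0}"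

definition S_with_xi :: "nat \<Rightarrow> nat \<Rightarrow> 'a::field witt set" where
  "S_with_xi p n = {D \<in> Wn p n. (\<forall>i b. b i = 0 \<longrightarrow> D i b = 0) \<and> divW p n D = 0}"

lemma subspace_W_without_xi: "W.subspace (W_without_xi p n)"
  by (rule W.subspaceI) (simp_all add: W_without_xi_def Wn_eq)

lemma subspace_S_with_xi: "W.subspace (S_with_xi p n)"
  by (rule W.subspaceI) (simp_all add: S_with_xi_def Wn_eq divW_add divW_scaleW)

lemma W_without_xi_Int_S_with_xi: "W_without_xi p n \<inter> S_with_xi p n = {0}"
  by (auto simp: W_without_xi_def S_with_xi_def Wn_eq fun_eq_iff) (metis neq0_conv)

lemma V1_subset_W_without_xi: "V1 p n \<subseteq> W_without_xi p n"
  unfolding V1_def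
  by (rule W.span_minimal[OF _ subspace_W_without_xi])
    (auto simp: B1_def W_without_xi_def Wn_def vecW_def monoA_def split: if_splits)

lemma Dij_in_S_with_xi:
  assumes a: "a \<in> expo p n" and ij: "1 \<le> i" "i < j" "j \<le> n" "a i \<noteq> 0" "a j \<noteq> 0"
  shows "Dij p n i j (monoA a) \<in> (S_with_xi p n :: 'a::field witt set)"
proof -
  have i: "i \<in> {1..n}" and j: "j \<in> {1..n}"
    using ij by auto
  have "Dij p n i j (monoA a) \<in> (Wn p n :: 'a witt set)"
    unfolding Dij_def Wn_def vecW_def using i j by (auto simp: dA_def split: if_splits)
  moreover have "Dij p n i j (monoA a) k b = (0::'a)" if "b k = 0" for k b
    using that ij by (auto simp: Dij_def vecW_def dA_monoA[OF a]) (auto simp: monoA_def dec_def split: if_splits)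
  moreover have "divW p n (Dij p n i j (monoA a)) = (0::'a trunc)"
    unfolding Dij_def divW_diff divW_vecW[OF i] divW_vecW[OF j]
    by (simp add: dA_commute[OF supported_monoA[OF a]])
  ultimately show ?thesis
    by (simp add: S_with_xi_def)
qed

lemma V2_subset_S_with_xi: "V2 p n \<subseteq> S_with_xi p n"
  unfolding V2_def by (rule W.span_minimal[OF _ subspace_S_with_xi]) (auto intro: Dij_in_S_with_xi)

lemma V1_Int_V2: "V1 p n \<inter> V2 p n = ({0} :: 'a::field witt set)"
proof -
  have "V1 p n \<inter> V2 p n \<subseteq> ({0} :: 'a witt set)"
    using V1_subset_W_without_xi V2_subset_S_with_xi W_without_xi_Int_S_with_xi by blast
  moreover have "(0::'a witt) \<in> V1 p n \<inter> V2 p n"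
    by (simp add: V1_def V2_def W.span_zero)
  ultimately show ?thesis
    by blast
qed

lemma independent_if_private_coeffs:
  assumes "finite B"
    and priv: "\<And>v. v \<in> B \<Longrightarrow> \<exists>j b. v j b \<noteq> 0 \<and> (\<forall>w\<in>B. w \<noteq> v \<longrightarrow> w j b = 0)"
  shows "\<not> W.dependent (B :: 'a::field witt set)"
proof
  assume "W.dependent B"
  then obtain u v where v: "v \<in> B" "u v \<noteq> 0" and lc: "(\<Sum>w\<in>B. scaleW (u w) w) = 0"
    using W.dependent_finite[OF \<open>finite B\<close>] by blast
  obtain j b where jb: "v j b \<noteq> 0" "\<forall>w\<in>B. w \<noteq> v \<longrightarrow> w j b = 0"
    using priv[OF v(1)] by blast
  have "0 = (\<Sum>w\<in>B. scaleW (u w) w) j b"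
    using lc by simp
  also have "\<dots> = (\<Sum>w\<in>B. u w * w j b)"
    by (simp add: sum_fun_apply2)
  also have "\<dots> = (\<Sum>w\<in>B. if w = v then u v * v j b else 0)"
    using jb by (intro sum.cong) auto
  also have "\<dots> = u v * v j b"
    using v \<open>finite B\<close> by simp
  finally show False
    using v jb by simp
qed

section \<open>A basis of \<open>V\<^sub>2\<close>\<close>

definition free_dirs :: "nat \<Rightarrow> nat \<Rightarrow> (nat \<Rightarrow> nat) \<Rightarrow> nat set" where
  "free_dirs p n c = {j \<in> {1..n}. c j + 1 < p}"

definition first_free :: "nat \<Rightarrow> nat \<Rightarrow> (nat \<Rightarrow> nat) \<Rightarrow> nat" where
  "first_free p n c = Min (free_dirs p n c)"

definition V2_index :: "nat \<Rightarrow> nat \<Rightarrow> ((nat \<Rightarrow> nat) \<times> nat) set" where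
  "V2_index p n = {(c, i). c \<in> expo p n \<and> i \<in> free_dirs p n c \<and> first_free p n c < i}"

text \<open>\<open>V2_vec p n (c, i) = D_ki(x^(c + \<epsilon>_i + \<epsilon>_k))\<close> with \<open>k\<close> the first free direction of \<open>c\<close>.
  Among these vectors only \<open>V2_vec p n (c, i)\<close> has a nonzero coefficient at \<open>x^(c + \<epsilon>_i) \<partial>_i\<close>.\<close>

definition V2_vec :: "nat \<Rightarrow> nat \<Rightarrow> (nat \<Rightarrow> nat) \<times> nat \<Rightarrow> 'a::field witt" where
  "V2_vec p n x = (case x of (c, i) \<Rightarrow>
     Dij p n (first_free p n c) i (monoA (c(i := c i + 1, first_free p n c := c (first_free p n c) + 1))))"

lemma first_free_le: "j \<in> free_dirs p n c \<Longrightarrow> first_free p n c \<le> j"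
  by (simp add: first_free_def free_dirs_def)

lemma first_free_in: "free_dirs p n c \<noteq> {} \<Longrightarrow> first_free p n c \<in> free_dirs p n c"
  unfolding first_free_def by (rule Min_in) (simp_all add: free_dirs_def)

lemma V2_indexD:
  assumes "(c, i) \<in> V2_index p n"
  shows "c \<in> expo p n" "i \<in> {1..n}" "c i + 1 < p" "first_free p n c < i"
    "first_free p n c \<in> {1..n}" "c (first_free p n c) + 1 < p"
proof -
  show "c \<in> expo p n" "i \<in> {1..n}" "c i + 1 < p" "first_free p n c < i"
    using assms by (auto simp: V2_index_def free_dirs_def)
  have "free_dirs p n c \<noteq> {}"
    using assms by (auto simp: V2_index_def)
  then show "first_free p n c \<in> {1..n}" "c (first_free p n c) + 1 < p"
    using first_free_in by (auto simp: free_dirs_def)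
qed

lemma finite_V2_index [simp]: "finite (V2_index p n)"
proof -
  have "V2_index p n \<subseteq> expo p n \<times> {1..n}"
    by (auto simp: V2_index_def free_dirs_def)
  then show ?thesis
    by (rule finite_subset) simp
qed

lemma Dij_raised_apply:
  assumes c: "c \<in> expo p n" and ik: "i \<noteq> k" "i \<in> {1..n}" "k \<in> {1..n}" "c i + 1 < p" "c k + 1 < p"
  shows "(Dij p n k i (monoA (c(i := c i + 1, k := c k + 1))) :: 'a::field witt) j b
    = (if j = k \<and> b = c(k := c k + 1) then of_nat (c i + 1) else 0)
      - (if j = i \<and> b = c(i := c i + 1) then of_nat (c k + 1) else 0)"
proof -
  define a where "a = c(i := c i + 1, k := c k + 1)"
  have "a = (c(i := c i + 1))(k := (c(i := c i + 1)) k + 1)"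
    using ik by (simp add: a_def)
  also have "\<dots> \<in> expo p n"
    by (rule expo_raise[OF expo_raise[OF c ik(2,4)]]) (use ik in auto)
  finally have a: "a \<in> expo p n" .
  have "a i = c i + 1" "a k = c k + 1" "dec a i = c(k := c k + 1)" "dec a k = c(i := c i + 1)"
    using ik by (auto simp: a_def dec_def fun_eq_iff)
  then show ?thesis
    unfolding a_def[symmetric] Dij_def dA_monoA[OF a]
    using ik(1) by (auto simp: vecW_apply monoA_def)
qed

lemma V2_vec_apply:
  assumes "(c, i) \<in> V2_index p n"
  shows "(V2_vec p n (c, i) :: 'a::field witt) j b
    = (if j = first_free p n c \<and> b = c(first_free p n c := c (first_free p n c) + 1)
       then of_nat (c i + 1) else 0)
      - (if j = i \<and> b = c(i := c i + 1) then of_nat (c (first_free p n c) + 1) else 0)"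
  unfolding V2_vec_def prod.case using V2_indexD[OF assms] by (intro Dij_raised_apply) auto

lemma V2_vec_own_coeff:
  assumes "(c, i) \<in> V2_index p n"
  shows "(V2_vec p n (c, i) :: 'a::field witt) i (c(i := c i + 1)) = - of_nat (c (first_free p n c) + 1)"
  using V2_indexD[OF assms] by (simp add: V2_vec_apply[OF assms])

lemma V2_vec_own_coeff_nonzero:
  assumes "(c, i) \<in> V2_index p n" and nz: "\<And>k. 0 < k \<Longrightarrow> k < p \<Longrightarrow> of_nat k \<noteq> (0::'a::field)"
  shows "(V2_vec p n (c, i) :: 'a witt) i (c(i := c i + 1)) \<noteq> 0"
proof -
  have "of_nat (c (first_free p n c) + 1) \<noteq> (0::'a)"
    by (rule nz) (use V2_indexD[OF assms(1)] in auto)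
  then show ?thesis
    unfolding V2_vec_own_coeff[OF assms(1)] by (simp only: neg_equal_0_iff_equal not_False_eq_True)
qed

lemma V2_vec_private_coeff:
  assumes x: "(c, i) \<in> V2_index p n" and y: "(c', i') \<in> V2_index p n"
    and nz: "(V2_vec p n (c', i') :: 'a::field witt) i (c(i := c i + 1)) \<noteq> 0"
  shows "(c', i') = (c, i)"
proof -
  have upd_inj: "c(j := c j + 1) = c'(j := c' j + 1) \<Longrightarrow> c = c'" for j
    by (auto simp: fun_eq_iff split: if_splits)
  from nz consider
      "i = first_free p n c'" "c(i := c i + 1) = c'(first_free p n c' := c' (first_free p n c') + 1)"
    | "i = i'" "c(i := c i + 1) = c'(i' := c' i' + 1)"
    unfolding V2_vec_apply[OF y] by (auto split: if_splits)
  then show ?thesis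
  proof cases
    case 1
    then have "c = c'"
      using upd_inj by metis
    then show ?thesis
      using 1(1) V2_indexD(4)[OF x] by simp
  next
    case 2
    then show ?thesis
      using upd_inj by metis
  qed
qed

lemma V2_lincomb_private_coeff:
  assumes "(c, i) \<in> V2_index p n"
  shows "(\<Sum>x\<in>V2_index p n. scaleW (lam x) (V2_vec p n x)) i (c(i := c i + 1))
    = lam (c, i) * (V2_vec p n (c, i) :: 'a::field witt) i (c(i := c i + 1))"
proof -
  have "(\<Sum>x\<in>V2_index p n. scaleW (lam x) (V2_vec p n x)) i (c(i := c i + 1))
      = (\<Sum>x\<in>V2_index p n. if x = (c, i) then lam (c, i) * V2_vec p n (c, i) i (c(i := c i + 1)) else 0)"
    unfolding sum_fun_apply2 scaleW_apply
    using V2_vec_private_coeff[OF assms] by (intro sum.cong) fastforce+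
  then show ?thesis
    using assms by simp
qed

lemma V2_vec_in_V2: "V2_vec p n ` V2_index p n \<subseteq> (V2 p n :: 'a::field witt set)"
proof clarify
  fix c i
  assume x: "(c, i) \<in> V2_index p n"
  note facts = V2_indexD[OF x]
  define k where "k = first_free p n c"
  define a where "a = c(i := c i + 1, k := c k + 1)"
  have "a = (c(i := c i + 1))(k := (c(i := c i + 1)) k + 1)"
    using facts by (simp add: a_def k_def)
  also have "\<dots> \<in> expo p n"
    by (rule expo_raise[OF expo_raise[OF facts(1-3)]]) (use facts in \<open>auto simp: k_def\<close>)
  finally have "a \<in> expo p n" .
  moreover have "1 \<le> k" "k < i" "i \<le> n" "a k \<noteq> 0" "a i \<noteq> 0"
    using facts by (auto simp: k_def a_def)
  moreover have "V2_vec p n (c, i) = Dij p n k i (monoA a)"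
    by (simp add: V2_vec_def k_def a_def)
  ultimately show "(V2_vec p n (c, i) :: 'a witt) \<in> V2 p n"
    unfolding V2_def by (blast intro: W.span_base)
qed

lemma inj_on_V2_vec:
  assumes nz: "\<And>k. 0 < k \<Longrightarrow> k < p \<Longrightarrow> of_nat k \<noteq> (0::'a::field)"
  shows "inj_on (V2_vec p n :: _ \<Rightarrow> 'a witt) (V2_index p n)"
proof (rule inj_onI)
  fix x y
  assume x: "x \<in> V2_index p n" and y: "y \<in> V2_index p n"
    and eq: "(V2_vec p n x :: 'a witt) = V2_vec p n y"
  obtain c i c' i' where xy: "x = (c, i)" "y = (c', i')"
    by fastforce
  have x': "(c, i) \<in> V2_index p n" and y': "(c', i') \<in> V2_index p n"
    using x y by (simp_all add: xy)
  have "(V2_vec p n (c', i') :: 'a witt) i (c(i := c i + 1)) \<noteq> 0"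
    using V2_vec_own_coeff_nonzero[OF x' nz] eq by (simp add: xy)
  then have "(c', i') = (c, i)"
    by (rule V2_vec_private_coeff[OF x' y'])
  then show "x = y"
    by (simp add: xy)
qed

lemma independent_V2_vecs:
  assumes nz: "\<And>k. 0 < k \<Longrightarrow> k < p \<Longrightarrow> of_nat k \<noteq> (0::'a::field)"
  shows "\<not> W.dependent (V2_vec p n ` V2_index p n :: 'a witt set)"
proof (rule independent_if_private_coeffs)
  fix v :: "'a witt"
  assume "v \<in> V2_vec p n ` V2_index p n"
  then obtain c i where x: "(c, i) \<in> V2_index p n" and v: "v = V2_vec p n (c, i)"
    by auto
  have "w i (c(i := c i + 1)) = 0" if "w \<in> V2_vec p n ` V2_index p n" "w \<noteq> v" for w
    using that V2_vec_private_coeff[OF x] v by fastforce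
  then show "\<exists>j b. v j b \<noteq> 0 \<and> (\<forall>w\<in>V2_vec p n ` V2_index p n. w \<noteq> v \<longrightarrow> w j b = 0)"
    using V2_vec_own_coeff_nonzero[OF x nz] v by blast
qed simp

lemma divW_apply:
  "c \<in> expo p n \<Longrightarrow> divW p n D c = (\<Sum>m\<in>{1..n}. of_nat (c m + 1) * D m (c(m := c m + 1)))"
  by (simp add: divW_def sum_fun_apply dA_def)

lemma divW_apply_first_free:
  assumes p0: "of_nat p = (0::'a::field)"
    and vanish: "\<And>c i. (c, i) \<in> V2_index p n \<Longrightarrow> R i (c(i := c i + 1)) = (0::'a)"
    and c: "c \<in> expo p n" and j: "j \<in> free_dirs p n c" and first: "first_free p n c = j"
  shows "divW p n R c = of_nat (c j + 1) * R j (c(j := c j + 1))"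
proof -
  have "of_nat (c m + 1) * R m (c(m := c m + 1)) = 0" if m: "m \<in> {1..n}" "m \<noteq> j" for m
  proof (cases "c m + 1 < p")
    case True
    then have "(c, m) \<in> V2_index p n"
      using first_free_le[of m p n c] first m c by (simp add: V2_index_def free_dirs_def)
    then show ?thesis
      using vanish by simp
  next
    case False
    have "c m < p"
      using c m by (simp add: expo_def)
    then have "c m + 1 = p"
      using False by simp
    then show ?thesis
      using p0 by simp
  qed
  then have "(\<Sum>m\<in>{1..n} - {j}. of_nat (c m + 1) * R m (c(m := c m + 1))) = 0"
    by (intro sum.neutral) auto
  moreover have "j \<in> {1..n}"
    using j by (simp add: free_dirs_def)
  ultimately show ?thesis
    by (simp add: divW_apply[OF c] sum.remove[of _ j])
qed

text \<open>If \<open>R j b \<noteq> 0\<close>, write \<open>b = c + \<epsilon>_j\<close>. Vanishing at the private coefficients forces \<open>j\<close>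
  to be the first free direction of \<open>c\<close>, so \<open>(div R)(x^c) = (c_j + 1) R j b \<noteq> 0\<close>.\<close>

lemma S_with_xi_eq_0:
  assumes p0: "of_nat p = (0::'a::field)"
    and nz: "\<And>k. 0 < k \<Longrightarrow> k < p \<Longrightarrow> of_nat k \<noteq> (0::'a)"
    and R: "R \<in> (S_with_xi p n :: 'a witt set)"
    and vanish: "\<And>c i. (c, i) \<in> V2_index p n \<Longrightarrow> R i (c(i := c i + 1)) = 0"
  shows "R = 0"
proof (rule ccontr)
  assume "R \<noteq> 0"
  then obtain j b where jb: "R j b \<noteq> 0"
    by (auto simp: fun_eq_iff)
  have j: "j \<in> {1..n}" and b: "b \<in> expo p n" and bj: "b j \<noteq> 0" and divR: "divW p n R = 0"
    using R jb by (auto simp: S_with_xi_def Wn_def)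
  define c where "c = b(j := b j - 1)"
  have c: "c \<in> expo p n"
    unfolding c_def by (rule expo_mono[OF b]) auto
  have cb: "c(j := c j + 1) = b"
    using bj by (auto simp: c_def fun_eq_iff)
  have cj: "c j + 1 < p"
    using bj b j by (auto simp: c_def expo_def)
  then have j_free: "j \<in> free_dirs p n c"
    using j by (simp add: free_dirs_def)
  have "first_free p n c = j"
  proof (rule ccontr)
    assume "first_free p n c \<noteq> j"
    then have "(c, j) \<in> V2_index p n"
      using first_free_le[OF j_free] c j_free by (simp add: V2_index_def)
    then show False
      using vanish jb cb by fastforce
  qed
  then have "divW p n R c = of_nat (c j + 1) * R j b"
    using divW_apply_first_free[where R = R, OF p0 vanish c j_free] cb by simp
  moreover have "of_nat (c j + 1) \<noteq> (0::'a)"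
    using cj by (intro nz) auto
  ultimately show False
    using divR jb by simp
qed

lemma S_with_xi_subset_span:
  assumes p0: "of_nat p = (0::'a::field)"
    and nz: "\<And>k. 0 < k \<Longrightarrow> k < p \<Longrightarrow> of_nat k \<noteq> (0::'a)"
  shows "(S_with_xi p n :: 'a witt set) \<subseteq> W.span (V2_vec p n ` V2_index p n)"
proof
  fix D :: "'a witt"
  assume D: "D \<in> S_with_xi p n"
  define lam where "lam x = (case x of (c, i) \<Rightarrow> - D i (c(i := c i + 1)) / of_nat (c (first_free p n c) + 1))" for x
  define S where "S = (\<Sum>x\<in>V2_index p n. scaleW (lam x) (V2_vec p n x :: 'a witt))"
  have S_span: "S \<in> W.span (V2_vec p n ` V2_index p n)"
    unfolding S_def by (intro W.span_sum W.span_scale W.span_base) auto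
  have "W.span (V2_vec p n ` V2_index p n) \<subseteq> (S_with_xi p n :: 'a witt set)"
    using W.span_minimal[OF V2_vec_in_V2] V2_subset_S_with_xi by (fastforce simp: V2_def)
  then have DS: "D - S \<in> S_with_xi p n"
    using S_span D by (blast intro: W.subspace_diff[OF subspace_S_with_xi])
  have vanish: "(D - S) i (c(i := c i + 1)) = 0" if "(c, i) \<in> V2_index p n" for c i
  proof -
    have "of_nat (c (first_free p n c) + 1) \<noteq> (0::'a)"
      by (rule nz) (use V2_indexD[OF that] in auto)
    have "S i (c(i := c i + 1)) = lam (c, i) * - of_nat (c (first_free p n c) + 1)"
      unfolding S_def V2_lincomb_private_coeff[OF that] V2_vec_own_coeff[OF that] ..
    also have "\<dots> = D i (c(i := c i + 1))"
      using \<open>of_nat (c (first_free p n c) + 1) \<noteq> 0\<close> by (simp add: lam_def field_simps)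
    finally show ?thesis
      by simp
  qed
  have "D - S = 0"
    by (rule S_with_xi_eq_0[OF p0 nz DS vanish])
  then show "D \<in> W.span (V2_vec p n ` V2_index p n)"
    using S_span by simp
qed

lemma V2_eq_span_V2_vec:
  assumes p0: "of_nat p = (0::'a::field)"
    and nz: "\<And>k. 0 < k \<Longrightarrow> k < p \<Longrightarrow> of_nat k \<noteq> (0::'a)"
  shows "(V2 p n :: 'a witt set) = W.span (V2_vec p n ` V2_index p n)"
  using W.span_minimal[OF V2_vec_in_V2] V2_subset_S_with_xi S_with_xi_subset_span[OF p0 nz]
  by (fastforce simp: V2_def)

lemma V2_eq_S_with_xi:
  assumes p0: "of_nat p = (0::'a::field)"
    and nz: "\<And>k. 0 < k \<Longrightarrow> k < p \<Longrightarrow> of_nat k \<noteq> (0::'a)"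
  shows "(V2 p n :: 'a witt set) = S_with_xi p n"
  using V2_subset_S_with_xi S_with_xi_subset_span[OF p0 nz] V2_eq_span_V2_vec[OF p0 nz] by blast

lemma dim_V2:
  assumes p0: "of_nat p = (0::'a::field)"
    and nz: "\<And>k. 0 < k \<Longrightarrow> k < p \<Longrightarrow> of_nat k \<noteq> (0::'a)"
  shows "W.dim (V2 p n :: 'a witt set) = card (V2_index p n)"
  using W.dim_span_eq_card_independent[OF independent_V2_vecs[OF nz]]
    card_image[OF inj_on_V2_vec[OF nz]] V2_eq_span_V2_vec[OF p0 nz]
  by simp

section \<open>\<open>S(n) = V\<^sub>1 \<oplus> V\<^sub>2\<close>\<close>

lemma applyW_vecW: "i \<in> {1..n} \<Longrightarrow> applyW p n (vecW i f) h = mulA p n f (dA p n i h)"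
  unfolding applyW_def vecW_apply by (simp add: if_distrib[of "\<lambda>f. mulA p n f _"] cong: if_cong)

lemma bracketW_vecW:
  assumes "i \<in> {1..n}" "j \<in> {1..n}"
  shows "bracketW p n (vecW i f) (vecW j g)
    = vecW j (mulA p n f (dA p n i g)) - vecW i (mulA p n g (dA p n j f))"
  using assms by (auto simp: fun_eq_iff bracketW_def vecW_apply applyW_vecW)

lemma vecW_monoA_in_Stilde:
  assumes "i \<in> {1..n}" "a \<in> expo p n" "a i = 0"
  shows "vecW i (monoA a) \<in> (Stilde p n :: 'a::field witt set)"
  using assms by (simp add: Stilde_def vecW_in_Wn divW_vecW dA_monoA)

lemma bracketW_in_Sn:
  "D \<in> Stilde p n \<Longrightarrow> E \<in> Stilde p n \<Longrightarrow> bracketW p n D E \<in> (Sn p n :: 'a::field witt set)"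
  unfolding Sn_def by (blast intro: W.span_base)

text \<open>\<open>x^a \<partial>_i = (a_j + 1)^-1 [\<partial>_j, x^(a + \<epsilon>_j) \<partial>_i]\<close> for any \<open>j \<noteq> i\<close> with \<open>a_j < p - 1\<close>.\<close>

lemma B1_subset_Sn:
  assumes p1: "p > 1" and nz: "\<And>k. 0 < k \<Longrightarrow> k < p \<Longrightarrow> of_nat k \<noteq> (0::'a::field)"
  shows "B1 p n \<subseteq> (Sn p n :: 'a witt set)"
proof
  fix v :: "'a witt"
  assume "v \<in> B1 p n"
  then obtain a i j where v: "v = vecW i (monoA a)" and a: "a \<in> expo p n" and i: "i \<in> {1..n}"
    and ai: "a i = 0" and j: "j \<in> {1..n}" "j \<noteq> i" "a j \<noteq> p - 1"
    unfolding B1_def by blast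
  have "a j < p"
    using a j(1) by (simp add: expo_def)
  then have ajp: "a j + 1 < p"
    using j(3) by linarith
  define a' where "a' = a(j := a j + 1)"
  have a': "a' \<in> expo p n"
    unfolding a'_def by (rule expo_raise[OF a j(1) ajp])
  have z: "0 \<in> expo p n"
    using p1 by (simp add: zero_in_expo)
  have "dec a' j = a"
    by (auto simp: a'_def dec_def fun_eq_iff)
  then have "bracketW p n (vecW j (monoA 0)) (vecW i (monoA a'))
      = vecW i (scaleA (of_nat (a j + 1)) (monoA a) :: 'a trunc)"
    using a a' z by (simp add: bracketW_vecW[OF j(1) i] dA_monoA mulA_scaleA_right mulA_monoA)
      (simp add: a'_def vecW_def zero_fun_def[symmetric])
  also have "\<dots> = scaleW (of_nat (a j + 1)) v"
    by (simp add: v fun_eq_iff vecW_apply)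
  finally have "v = scaleW (1 / of_nat (a j + 1)) (bracketW p n (vecW j (monoA 0)) (vecW i (monoA a')))"
    using nz[of "a j + 1"] ajp by simp
  moreover have "bracketW p n (vecW j (monoA 0)) (vecW i (monoA a')) \<in> (Sn p n :: 'a witt set)"
    using ai j(2) by (intro bracketW_in_Sn vecW_monoA_in_Stilde j(1) i z a') (simp_all add: a'_def)
  ultimately show "v \<in> Sn p n"
    unfolding Sn_def by (simp add: W.span_scale)
qed

text \<open>\<open>D_ij(x^a) = [x_i^(a_i) \<partial>_j, x^(a - a_i \<epsilon>_i) \<partial>_i]\<close>.\<close>

lemma Dij_in_Sn:
  assumes p1: "p > 1" and a: "a \<in> expo p n" and ij: "1 \<le> i" "i < j" "j \<le> n"
  shows "Dij p n i j (monoA a) \<in> (Sn p n :: 'a::field witt set)"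
proof -
  have i: "i \<in> {1..n}" and j: "j \<in> {1..n}" and ji: "j \<noteq> i"
    using ij by auto
  define v where "v = (\<lambda>k. if k = i then a i else (0::nat))"
  define u where "u = a(i := 0)"
  have v: "v \<in> expo p n"
    unfolding v_def by (rule expo_mono[OF a]) auto
  have u: "u \<in> expo p n"
    unfolding u_def by (rule expo_mono[OF a]) auto
  have "v + dec u j = dec a j" "u + dec v i = dec a i" "u j = a j" "v i = a i"
    using ji by (auto simp: v_def u_def dec_def fun_eq_iff)
  then have "mulA p n (monoA v) (dA p n j (monoA u)) = (scaleA (of_nat (a j)) (monoA (dec a j)) :: 'a trunc)"
    and "mulA p n (monoA u) (dA p n i (monoA v)) = (scaleA (of_nat (a i)) (monoA (dec a i)) :: 'a trunc)"
    using dec_in_expo[OF a] by (simp_all add: dA_monoA u v mulA_scaleA_right mulA_monoA dec_in_expo)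
  then have "bracketW p n (vecW j (monoA v)) (vecW i (monoA u)) = (Dij p n i j (monoA a) :: 'a witt)"
    by (simp add: bracketW_vecW[OF j i] Dij_def dA_monoA[OF a])
  moreover have "bracketW p n (vecW j (monoA v)) (vecW i (monoA u)) \<in> (Sn p n :: 'a witt set)"
    using ji by (intro bracketW_in_Sn vecW_monoA_in_Stilde i j u v) (simp_all add: u_def v_def)
  ultimately show ?thesis
    by simp
qed

lemma V1_subset_Sn:
  assumes "p > 1" and "\<And>k. 0 < k \<Longrightarrow> k < p \<Longrightarrow> of_nat k \<noteq> (0::'a::field)"
  shows "V1 p n \<subseteq> (Sn p n :: 'a witt set)"
  unfolding V1_def Sn_def using B1_subset_Sn[OF assms]
  by (intro W.span_minimal W.subspace_span) (simp add: Sn_def)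

lemma V2_subset_Sn: "p > 1 \<Longrightarrow> V2 p n \<subseteq> (Sn p n :: 'a::field witt set)"
  unfolding V2_def Sn_def using Dij_in_Sn
  by (intro W.span_minimal W.subspace_span) (auto simp: Sn_def)

lemma Wn_expansion:
  assumes "D \<in> Wn p n"
  shows "D = (\<Sum>x\<in>{1..n} \<times> expo p n. scaleW (D (fst x) (snd x)) (vecW (fst x) (monoA (snd x))))"
proof (intro ext)
  fix j b
  have "(\<Sum>x\<in>{1..n} \<times> expo p n. scaleW (D (fst x) (snd x)) (vecW (fst x) (monoA (snd x)))) j b
      = (\<Sum>x\<in>{1..n} \<times> expo p n. if x = (j, b) then D j b else 0)"
    unfolding sum_fun_apply2 scaleW_apply by (rule sum.cong) (auto simp: vecW_apply monoA_def)
  also have "\<dots> = D j b"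
    using assms by (auto simp: Wn_def)
  finally show "D j b = (\<Sum>x\<in>{1..n} \<times> expo p n. scaleW (D (fst x) (snd x)) (vecW (fst x) (monoA (snd x)))) j b"
    by simp
qed

definition xi_free_part :: "'a::field witt \<Rightarrow> 'a witt" where
  "xi_free_part D = (\<lambda>i b. if b i = 0 then D i b else 0)"

lemma xi_free_part_in_V1:
  assumes D: "D \<in> Wn p n" and top: "\<forall>i\<in>{1..n}. D i (top_except p n i) = 0"
  shows "xi_free_part D \<in> V1 p n"
proof -
  let ?D0 = "xi_free_part D"
  have "?D0 \<in> Wn p n"
    using D by (simp add: Wn_def xi_free_part_def)
  then have "?D0 = (\<Sum>x\<in>{1..n} \<times> expo p n. scaleW (?D0 (fst x) (snd x)) (vecW (fst x) (monoA (snd x))))"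
    by (rule Wn_expansion)
  also have "\<dots> \<in> V1 p n"
    unfolding V1_def
  proof (intro W.span_sum)
    fix x
    assume x: "x \<in> {1..n} \<times> expo p n"
    obtain i b where ib: "x = (i, b)"
      by fastforce
    show "scaleW (?D0 (fst x) (snd x)) (vecW (fst x) (monoA (snd x))) \<in> W.span (B1 p n)"
    proof (cases "?D0 i b = 0")
      case False
      then have bi: "b i = 0" and Dib: "D i b \<noteq> 0"
        by (auto simp: xi_free_part_def split: if_splits)
      have i: "i \<in> {1..n}" and b: "b \<in> expo p n"
        using x ib by auto
      have "b \<noteq> top_except p n i"
        using top i Dib by auto
      then have "\<exists>j\<in>{1..n}. j \<noteq> i \<and> b j \<noteq> p - 1"
        using top_except_eq_iff[OF b bi] by blast
      then have "vecW i (monoA b) \<in> B1 p n"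
        using b i bi unfolding B1_def by blast
      then show ?thesis
        using ib by (auto intro: W.span_scale W.span_base)
    qed (simp add: ib W.span_zero)
  qed
  finally show ?thesis .
qed

lemma divW_xi_free_part: "divW p n (xi_free_part D) = 0"
proof -
  have "dA p n i (xi_free_part D i) = 0" for i
    by (rule ext) (simp add: dA_def xi_free_part_def)
  then show ?thesis
    by (simp add: divW_def)
qed

lemma diff_xi_free_part_in_S_with_xi:
  assumes "D \<in> Wn p n" "divW p n D = 0"
  shows "D - xi_free_part D \<in> S_with_xi p n"
proof -
  have "divW p n (D - xi_free_part D) = 0"
    using assms(2) by (simp add: divW_diff divW_xi_free_part)
  then show ?thesis
    using assms(1) by (auto simp: S_with_xi_def Wn_def xi_free_part_def split: if_splits)
qed

lemma Sn_subset_V1_plus_V2: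
  assumes p1: "p > 1" and p0: "of_nat p = (0::'a::field)"
    and nz: "\<And>k. 0 < k \<Longrightarrow> k < p \<Longrightarrow> of_nat k \<noteq> (0::'a)"
  shows "(Sn p n :: 'a witt set) \<subseteq> {u + v | u v. u \<in> V1 p n \<and> v \<in> V2 p n}"
  unfolding Sn_def
proof (rule W.span_minimal)
  show "W.subspace {u + v | u v. u \<in> (V1 p n :: 'a witt set) \<and> v \<in> V2 p n}"
    by (rule W.subspace_sums) (simp_all add: V1_def V2_def)
  show "{bracketW p n D E | D E. D \<in> Stilde p n \<and> E \<in> Stilde p n}
      \<subseteq> {u + v | u v. u \<in> (V1 p n :: 'a witt set) \<and> v \<in> V2 p n}"
  proof clarify
    fix D E :: "'a witt"
    assume D: "D \<in> Stilde p n" and E: "E \<in> Stilde p n"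
    let ?F = "bracketW p n D E"
    have F: "?F \<in> Wn p n"
      by (rule bracketW_in_Wn)
    have "xi_free_part ?F \<in> V1 p n"
      using F by (intro xi_free_part_in_V1 ballI bracketW_top_except_coeff D E) (use p1 p0 in auto)
    moreover have "?F - xi_free_part ?F \<in> V2 p n"
      using diff_xi_free_part_in_S_with_xi[OF F divW_bracketW_Stilde[OF D E p0]]
      by (simp add: V2_eq_S_with_xi[OF p0 nz])
    ultimately show "\<exists>u v. ?F = u + v \<and> u \<in> V1 p n \<and> v \<in> V2 p n"
      by (metis add.commute diff_add_cancel)
  qed
qed

lemma Sn_eq_V1_plus_V2:
  assumes p1: "p > 1" and p0: "of_nat p = (0::'a::field)"
    and nz: "\<And>k. 0 < k \<Longrightarrow> k < p \<Longrightarrow> of_nat k \<noteq> (0::'a)"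
  shows "(Sn p n :: 'a witt set) = {u + v | u v. u \<in> V1 p n \<and> v \<in> V2 p n}"
proof
  show "{u + v | u v. u \<in> V1 p n \<and> v \<in> V2 p n} \<subseteq> (Sn p n :: 'a witt set)"
    using V1_subset_Sn[OF p1 nz, of n] V2_subset_Sn[OF p1, of n]
    unfolding Sn_def by (blast intro: W.span_add)
qed (rule Sn_subset_V1_plus_V2[OF assms])

section \<open>Dimensions\<close>

lemma B1_eq_image:
  "B1 p n = (\<lambda>(i, a). vecW i (monoA a)) ` (SIGMA i:{1..n}. {a \<in> expo p n. a i = 0} - {top_except p n i})"
proof -
  have "(\<exists>j\<in>{1..n}. j \<noteq> i \<and> a j \<noteq> p - 1) \<longleftrightarrow> a \<noteq> top_except p n i"
    if "a \<in> expo p n" "a i = 0" for i a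
    using top_except_eq_iff[OF that] by blast
  then have "{(i, a). i \<in> {1..n} \<and> a \<in> expo p n \<and> a i = 0 \<and> (\<exists>j\<in>{1..n}. j \<noteq> i \<and> a j \<noteq> p - 1)}
      = (SIGMA i:{1..n}. {a \<in> expo p n. a i = 0} - {top_except p n i})"
    by auto
  moreover have "B1 p n = (\<lambda>(i, a). vecW i (monoA a)) `
      {(i, a). i \<in> {1..n} \<and> a \<in> expo p n \<and> a i = 0 \<and> (\<exists>j\<in>{1..n}. j \<noteq> i \<and> a j \<noteq> p - 1)}"
    unfolding B1_def by force
  ultimately show ?thesis
    by simp
qed

lemma vecW_monoA_apply: "vecW i (monoA a) j b = (if j = i \<and> b = a then 1 else 0)"
  by (simp add: vecW_apply monoA_def)

lemma inj_vecW_monoA: "inj (\<lambda>(i, a). vecW i (monoA a) :: 'a::field witt)"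
proof (rule injI, clarsimp)
  fix i a j b
  assume "(vecW i (monoA a) :: 'a witt) = vecW j (monoA b)"
  then have "(vecW i (monoA a) :: 'a witt) i a = vecW j (monoA b) i a"
    by simp
  then show "i = j \<and> a = b"
    by (simp add: vecW_monoA_apply split: if_splits)
qed

lemma finite_B1: "finite (B1 p n)"
  unfolding B1_eq_image by simp

lemma independent_B1: "\<not> W.dependent (B1 p n :: 'a::field witt set)"
proof (rule independent_if_private_coeffs[OF finite_B1])
  fix v :: "'a witt"
  assume "v \<in> B1 p n"
  then obtain i a where v: "v = vecW i (monoA a)"
    unfolding B1_def by blast
  have "w i a = 0" if "w \<in> B1 p n" "w \<noteq> v" for w
    using that v by (auto simp: B1_def vecW_monoA_apply)
  then show "\<exists>j b. v j b \<noteq> 0 \<and> (\<forall>w\<in>B1 p n. w \<noteq> v \<longrightarrow> w j b = 0)"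
    using v by (auto simp: vecW_monoA_apply)
qed

lemma card_B1:
  assumes "p \<ge> 1"
  shows "card (B1 p n :: 'a::field witt set) = n * (p ^ (n - 1) - 1)"
proof -
  have "card (B1 p n :: 'a witt set)
      = card (SIGMA i:{1..n}. {a \<in> expo p n. a i = 0} - {top_except p n i})"
    unfolding B1_eq_image by (rule card_image[OF inj_on_subset[OF inj_vecW_monoA]]) simp
  also have "\<dots> = (\<Sum>i\<in>{1..n}. card ({a \<in> expo p n. a i \<in> {0}} - {top_except p n i}))"
    by (subst card_SigmaI) auto
  also have "\<dots> = (\<Sum>i\<in>{1..n}. p ^ (n - 1) - 1)"
  proof (rule sum.cong[OF refl])
    fix i
    assume i: "i \<in> {1..n}"
    have "top_except p n i \<in> {a \<in> expo p n. a i \<in> {0}}"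
      using top_expo_in_expo[OF assms, of n] by (auto simp: top_except_def expo_def top_expo_def)
    then show "card ({a \<in> expo p n. a i \<in> {0}} - {top_except p n i}) = p ^ (n - 1) - 1"
      using card_expo_slice[OF i, of p "{0}"] assms by (simp add: card_Diff_singleton)
  qed
  finally show ?thesis
    by simp
qed

lemma dim_V1:
  assumes "p \<ge> 1"
  shows "W.dim (V1 p n :: 'a::field witt set) = n * (p ^ (n - 1) - 1)"
  unfolding V1_def W.dim_span_eq_card_independent[OF independent_B1] by (rule card_B1[OF assms])

lemma V2_index_eq_Sigma: "V2_index p n = (SIGMA c:expo p n. free_dirs p n c - {first_free p n c})"
  unfolding V2_index_def using first_free_le by (force simp: free_dirs_def)

lemma free_dirs_eq_empty_iff:
  assumes "c \<in> expo p n" "p \<ge> 1"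
  shows "free_dirs p n c = {} \<longleftrightarrow> c = top_expo p n"
proof
  assume empty: "free_dirs p n c = {}"
  show "c = top_expo p n"
  proof
    fix k
    show "c k = top_expo p n k"
    proof (cases "k \<in> {1..n}")
      case True
      then have "\<not> c k + 1 < p" "c k < p"
        using empty assms(1) by (auto simp: free_dirs_def expo_def)
      then show ?thesis
        using True by (simp add: top_expo_def)
    next
      case False
      have "c k = 0"
        by (rule expo_outside[OF assms(1) False])
      then show ?thesis
        unfolding top_expo_def by (simp only: if_not_P[OF False])
    qed
  qed
next
  assume "c = top_expo p n"
  then show "free_dirs p n c = {}"
    using assms(2) by (auto simp: free_dirs_def top_expo_def)
qed

text \<open>Over each \<open>c \<noteq> \<tau>\<close> there are \<open>|free_dirs c| - 1\<close> indices and over \<open>\<tau>\<close> none; summing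
  \<open>|free_dirs c|\<close> over all \<open>c\<close> counts the pairs \<open>(c, i)\<close> with \<open>c_i < p - 1\<close> instead.\<close>

lemma card_V2_index:
  assumes "p \<ge> 1"
  shows "card (V2_index p n) + (p ^ n - 1) = n * ((p - 1) * p ^ (n - 1))"
proof -
  have card_minus_first: "card (free_dirs p n c - {first_free p n c}) + (if free_dirs p n c \<noteq> {} then 1 else 0)
      = card (free_dirs p n c)" for c
    using first_free_in[of p n c] by (cases "free_dirs p n c = {}")
      (simp_all add: card_Diff_singleton free_dirs_def Suc_leI card_gt_0_iff)
  have "card (V2_index p n) = (\<Sum>c\<in>expo p n. card (free_dirs p n c - {first_free p n c}))"
    unfolding V2_index_eq_Sigma by (rule card_SigmaI) (auto simp: free_dirs_def)
  moreover have "p ^ n - 1 = (\<Sum>c\<in>expo p n. if free_dirs p n c \<noteq> {} then 1 else 0)"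
  proof -
    have "{c \<in> expo p n. free_dirs p n c \<noteq> {}} = expo p n - {top_expo p n}"
      using free_dirs_eq_empty_iff[OF _ assms] by auto
    then show ?thesis
      using top_expo_in_expo[OF assms] by (simp add: sum.If_cases Int_def card_Diff_singleton card_expo)
  qed
  ultimately have "card (V2_index p n) + (p ^ n - 1) = (\<Sum>c\<in>expo p n. card (free_dirs p n c))"
    by (simp add: sum.distrib[symmetric] card_minus_first)
  also have "\<dots> = (\<Sum>c\<in>expo p n. \<Sum>i\<in>{1..n}. if c i \<in> {..<p - 1} then 1 else 0)"
  proof (rule sum.cong[OF refl])
    fix c
    have "free_dirs p n c = {1..n} \<inter> {i. c i \<in> {..<p - 1}}"
      using assms by (auto simp: free_dirs_def)
    then show "card (free_dirs p n c) = (\<Sum>i\<in>{1..n}. if c i \<in> {..<p - 1} then 1 else 0)"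
      by (simp add: sum.If_cases)
  qed
  also have "\<dots> = (\<Sum>i\<in>{1..n}. card {c \<in> expo p n. c i \<in> {..<p - 1}})"
    by (subst sum.swap) (simp add: sum.If_cases Int_def)
  also have "\<dots> = (\<Sum>i\<in>{1..n}. (p - 1) * p ^ (n - 1))"
  proof (rule sum.cong[OF refl])
    fix i
    assume "i \<in> {1..n}"
    moreover have "{..<p - 1} \<inter> {..<p} = {..<p - 1}"
      by auto
    ultimately show "card {c \<in> expo p n. c i \<in> {..<p - 1}} = (p - 1) * p ^ (n - 1)"
      using card_expo_slice[of i n p "{..<p - 1}"] by simp
  qed
  finally show ?thesis
    by simp
qed

lemma int_dim_V2:
  assumes p1: "p \<ge> 1" and p0: "of_nat p = (0::'a::field)"
    and nz: "\<And>k. 0 < k \<Longrightarrow> k < p \<Longrightarrow> of_nat k \<noteq> (0::'a)"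
  shows "int (W.dim (V2 p n :: 'a witt set)) = int n * int p ^ (n - 1) * (int p - 1) - int p ^ n + 1"
proof -
  have "int (card (V2_index p n)) + int (p ^ n - 1) = int (n * ((p - 1) * p ^ (n - 1)))"
    using card_V2_index[OF p1] by (metis of_nat_add)
  then show ?thesis
    using p1 by (simp add: dim_V2[OF p0 nz] of_nat_diff algebra_simps)
qed

theorem lemma4p1:
  fixes p n :: nat
  assumes "prime p" and "p > 2" and "CHAR('a::alg_closed_field) = p" and "n \<ge> 2"
  shows "(Sn p n :: 'a witt set) = {u + v | u v. u \<in> V1 p n \<and> v \<in> V2 p n}
      \<and> (V1 p n :: 'a witt set) \<inter> V2 p n = {0}
      \<and> \<not> module.dependent scaleW (B1 p n :: 'a witt set)
      \<and> vector_space.dim scaleW (V1 p n :: 'a witt set) = n * (p ^ (n - 1) - 1)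
      \<and> int (vector_space.dim scaleW (V2 p n :: 'a witt set))
          = (int n - 1) * (int p ^ n - 1) - int n * (int p ^ (n - 1) - 1)
      \<and> (int n - 1) * (int p ^ n - 1) - int n * (int p ^ (n - 1) - 1)
          = int n * int p ^ (n - 1) * (int p - 1) - int p ^ n + 1"
proof -
  have p1: "p > 1"
    using assms(2) by simp
  have p0: "of_nat p = (0::'a)"
    using assms(3) by (simp add: of_nat_eq_0_iff_char_dvd)
  have nz: "of_nat k \<noteq> (0::'a)" if "0 < k" "k < p" for k
    using that assms(3) by (auto simp: of_nat_eq_0_iff_char_dvd dest: dvd_imp_le)
  have identity: "(int n - 1) * (int p ^ n - 1) - int n * (int p ^ (n - 1) - 1)
      = int n * int p ^ (n - 1) * (int p - 1) - int p ^ n + 1"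
    by (cases n) (simp_all add: algebra_simps)
  have "int (W.dim (V2 p n :: 'a witt set))
      = (int n - 1) * (int p ^ n - 1) - int n * (int p ^ (n - 1) - 1)"
    unfolding identity using p1 by (intro int_dim_V2 p0 nz) simp_all
  moreover have "W.dim (V1 p n :: 'a witt set) = n * (p ^ (n - 1) - 1)"
    using p1 by (intro dim_V1) simp
  ultimately show ?thesis
    using Sn_eq_V1_plus_V2[OF p1 p0 nz] V1_Int_V2[where 'a = 'a] independent_B1[where 'a = 'a] identity
    by blast
qed

end
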